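(* Let $C$ be a smooth convex plane curve with no two parallel tangent lines, with associated domain $D$ and area distance $f:D\to\mathbb{R}$, and let $C(r)$ be a regular parameterization of $C$ oriented as in the context. For $p\in D$ let $C(u)$, $C(v)$, with $u=u(p)<v(p)=v$, be the extremities of the minimal chord $l(p)$. Then: (1) $\nabla f(p)=R\big(\tfrac12(C(v)-C(u))\big)$; (2) $D^2f(p)(C'(u),C'(u))=0$, $D^2f(p)(C'(v),C'(v))=0$ and $D^2f(p)(C'(u),C'(v))=[C'(v),C'(u)]$; (3) $\det(D^2f(p))=-1$.
   Context: $C$ may have $2$, $1$ or $0$ endpoints. $D$ is the plane region bounded by $C$ and by the image(s) of $C$ under the homothety of ratio $1/2$ centred at each endpoint of $C$. A chord is a segment joining two points of $C$. For $p\in D$, each chord $l$ through $p$ bounds together with $C$ a region $D_l$; $l(p)$ is the chord through $p$ minimising the area of $D_l$, and $f(p)=\tfrac12\,\mathrm{area}(D_{l(p)})$. It is known that $p$ is the midpoint of $l(p)$. The parameterization is oriented so that the region $D_{l(p)}$ lies to the left of the arc $C([u,v])$, equivalently $f(p)=\tfrac14\int_{u(p)}^{v(p)}[C(s)-p,C'(s)]\,ds$. Notation: $[X,Y]$ is the determinant of the $2\times 2$ matrix with columns $X,Y$; $R$ is the counterclockwise rotation by ninety degrees; $D^2f$ is the Hessian of $f$ viewed as a bilinear form. *)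

theory Defs
  imports "HOL-Analysis.Analysis"
begin

text \<open>Plane = real \<times> real.  [X,Y] = determinant with columns X, Y; R = rotation by +90 degrees.\<close>

definition cross2 :: "real \<times> real \<Rightarrow> real \<times> real \<Rightarrow> real" where
  "cross2 X Y = fst X * snd Y - snd X * fst Y"

definition rot90 :: "real \<times> real \<Rightarrow> real \<times> real" where
  "rot90 X = (- snd X, fst X)"

definition smooth_curve :: "real set \<Rightarrow> (real \<Rightarrow> real \<times> real) \<Rightarrow> (real \<Rightarrow> real \<times> real) \<Rightarrow> bool" where
  "smooth_curve I C C' \<longleftrightarrow>
     (\<exists>Cd :: nat \<Rightarrow> real \<Rightarrow> real \<times> real. Cd 0 = C \<and> Cd 1 = C' \<and>
        (\<forall>k. \<forall>t\<in>I. (Cd k has_vector_derivative Cd (Suc k) t) (at t within I)))"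

definition regular_curve :: "real set \<Rightarrow> (real \<Rightarrow> real \<times> real) \<Rightarrow> bool" where
  "regular_curve I C' \<longleftrightarrow> (\<forall>t\<in>I. C' t \<noteq> 0)"

definition convex_curve :: "real set \<Rightarrow> (real \<Rightarrow> real \<times> real) \<Rightarrow> bool" where
  "convex_curve I C \<longleftrightarrow> inj_on C I \<and> C ` I \<subseteq> frontier (convex hull (C ` I))"

text \<open>Orientation: the curve lies to the left of each of its (oriented) tangent lines,
  so that the region cut off by a chord lies to the left of the arc.\<close>
definition left_oriented :: "real set \<Rightarrow> (real \<Rightarrow> real \<times> real) \<Rightarrow> (real \<Rightarrow> real \<times> real) \<Rightarrow> bool" where
  "left_oriented I C C' \<longleftrightarrow> (\<forall>s\<in>I. \<forall>t\<in>I. cross2 (C' t) (C s - C t) \<ge> 0)"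

definition no_parallel_tangents :: "real set \<Rightarrow> (real \<Rightarrow> real \<times> real) \<Rightarrow> bool" where
  "no_parallel_tangents I C' \<longleftrightarrow> (\<forall>s\<in>I. \<forall>t\<in>I. s \<noteq> t \<longrightarrow> cross2 (C' s) (C' t) \<noteq> 0)"

text \<open>Area of the region D_l cut off by the chord from C u to C v (u < v).\<close>
definition chord_area :: "(real \<Rightarrow> real \<times> real) \<Rightarrow> (real \<Rightarrow> real \<times> real) \<Rightarrow> real \<Rightarrow> real \<Rightarrow> real" where
  "chord_area C C' u v = (1/2) * integral {u..v} (\<lambda>s. cross2 (C s - C u) (C' s))"

definition chord_through :: "real set \<Rightarrow> (real \<Rightarrow> real \<times> real) \<Rightarrow> real \<times> real \<Rightarrow> real \<Rightarrow> real \<Rightarrow> bool" where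
  "chord_through I C p s t \<longleftrightarrow> s \<in> I \<and> t \<in> I \<and> s < t \<and> p \<in> closed_segment (C s) (C t)"

definition area_distance :: "real set \<Rightarrow> (real \<Rightarrow> real \<times> real) \<Rightarrow> (real \<Rightarrow> real \<times> real) \<Rightarrow> real \<times> real \<Rightarrow> real" where
  "area_distance I C C' p = (1/2) * Inf {chord_area C C' s t | s t. chord_through I C p s t}"

definition minimal_chord :: "real set \<Rightarrow> (real \<Rightarrow> real \<times> real) \<Rightarrow> (real \<Rightarrow> real \<times> real) \<Rightarrow> real \<times> real \<Rightarrow> real \<Rightarrow> real \<Rightarrow> bool" where
  "minimal_chord I C C' p u v \<longleftrightarrow> chord_through I C p u v \<and>
     (\<forall>s t. chord_through I C p s t \<longrightarrow> chord_area C C' u v \<le> chord_area C C' s t)"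

text \<open>The domain D: bounded by C and its images under the homotheties of ratio 1/2
  centred at the endpoints; equivalently the set of midpoints of pairs of curve points.\<close>
definition area_domain :: "real set \<Rightarrow> (real \<Rightarrow> real \<times> real) \<Rightarrow> (real \<times> real) set" where
  "area_domain I C = {(1/2) *\<^sub>R (C u + C v) | u v. u \<in> I \<and> v \<in> I \<and> u \<le> v}"

definition hess_det :: "(real \<times> real \<Rightarrow> real \<times> real) \<Rightarrow> real" where
  "hess_det H = (H (1,0) \<bullet> (1,0)) * (H (0,1) \<bullet> (0,1)) - (H (1,0) \<bullet> (0,1)) * (H (0,1) \<bullet> (1,0))"

end

theory Submission
  imports Defs
begin

text \<open>
  The chord through \<open>p\<close> having \<open>p\<close> as its midpoint is the unique minimal one. Any other chord
  through \<open>p\<close> crosses it, and the two arcs between their endpoints lie on opposite sides of \<open>p\<close>;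
  reparametrising both arcs by the direction in which they are seen from \<open>p\<close>, the swept area
  grows faster along the arc farther from \<open>p\<close>, which is the one cut off by the other chord.
  Hence near \<open>p\<close> the area distance is \<open>F \<circ> M\<^sup>-\<^sup>1\<close>, where \<open>M(u,v) = (C u + C v)/2\<close> and
  \<open>F(u,v)\<close> is half the area cut off by the chord from \<open>C u\<close> to \<open>C v\<close>. The inverse function
  theorem makes \<open>M\<^sup>-\<^sup>1\<close> smooth, the identity \<open>DF = R((C v - C u)/2) \<bullet> DM\<close> gives the gradient,
  and differentiating the gradient along \<open>M\<^sup>-\<^sup>1\<close> gives the Hessian, whose values on
  \<open>C' u\<close> and \<open>C' v\<close> are read off from \<open>DM(e\<^sub>1) = C' u/2\<close> and \<open>DM(e\<^sub>2) = C' v/2\<close>.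
\<close>

lemma bounded_bilinear_cross2: "bounded_bilinear cross2"
proof -
  have "bounded_bilinear (\<lambda>x y. rot90 x \<bullet> y)"
    by (rule bounded_bilinear.comp1[OF bounded_bilinear_inner])
       (auto simp: rot90_def intro!: bounded_linear_Pair bounded_linear_fst bounded_linear_snd bounded_linear_minus)
  moreover have "(\<lambda>x y. rot90 x \<bullet> y) = cross2"
    by (auto simp: fun_eq_iff rot90_def cross2_def inner_prod_def)
  ultimately show ?thesis by simp
qed

lemma cross2_simps:
  "cross2 (X + Y) Z = cross2 X Z + cross2 Y Z" "cross2 Z (X + Y) = cross2 Z X + cross2 Z Y"
  "cross2 (X - Y) Z = cross2 X Z - cross2 Y Z" "cross2 Z (X - Y) = cross2 Z X - cross2 Z Y"
  "cross2 (a *\<^sub>R X) Z = a * cross2 X Z" "cross2 Z (a *\<^sub>R X) = a * cross2 Z X"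
  "cross2 (- X) Z = - cross2 X Z" "cross2 Z (- X) = - cross2 Z X"
  "cross2 X X = 0" "cross2 0 Z = 0" "cross2 Z 0 = 0"
  by (auto simp: cross2_def algebra_simps)

lemma cross2_commute: "cross2 Y X = - cross2 X Y"
  by (simp add: cross2_def)

lemma inner_rot90: "rot90 X \<bullet> Y = cross2 X Y"
  by (simp add: rot90_def cross2_def inner_prod_def)

lemma bounded_linear_rot90: "bounded_linear rot90"
  unfolding rot90_def
  by (intro bounded_linear_Pair bounded_linear_minus bounded_linear_fst bounded_linear_snd bounded_linear_ident)

lemma inner_cross2_identity: "(d \<bullet> e) * cross2 w e - (w \<bullet> e) * cross2 d e = (e \<bullet> e) * cross2 w d"
  by (simp add: cross2_def inner_prod_def algebra_simps)

lemma cross2_scaleR_identity: "cross2 a e *\<^sub>R b - cross2 b e *\<^sub>R a = cross2 a b *\<^sub>R e"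
  by (simp add: cross2_def prod_eq_iff algebra_simps)

text \<open>Writing \<open>wc = k wr\<close> with \<open>k < 0\<close>, the hypotheses on \<open>d\<close> force \<open>k < -1\<close>.\<close>
lemma cross2_sq_less_on_opposite_rays:
  assumes collinear: "cross2 wr wc = 0" and r: "cross2 wr e < 0" and c: "cross2 wc e > 0"
    and d_mid: "cross2 d (- (wr + wc)) > 0" and d_c: "cross2 wc d > 0"
  shows "(cross2 wr e)\<^sup>2 < (cross2 wc e)\<^sup>2"
proof -
  have "cross2 wr e *\<^sub>R wc = cross2 wc e *\<^sub>R wr"
    using cross2_scaleR_identity[of wr e wc] collinear by simp
  hence scaled: "cross2 wr e * cross2 d wc = cross2 wc e * cross2 d wr"
    by (metis cross2_simps(6))
  have "cross2 wr e * cross2 d wc > 0"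
    using r d_c by (simp add: cross2_commute[of d] mult_neg_pos)
  hence d_r: "cross2 d wr > 0" using scaled c by (simp add: zero_less_mult_iff)
  have "cross2 wr e * (cross2 d wr + cross2 d wc) > 0"
    using r d_mid by (simp add: cross2_simps mult_neg_neg)
  hence "(cross2 wr e + cross2 wc e) * cross2 d wr > 0"
    using scaled by (simp add: algebra_simps)
  hence "- cross2 wr e < cross2 wc e" using d_r by (simp add: zero_less_mult_iff)
  from power_strict_mono[OF this _, of 2] r show ?thesis by simp
qed

lemma sub_scaled_neg:
  fixes A B m :: real
  assumes "A \<le> 0" "0 \<le> B" "A < 0 \<or> 0 < B" "0 < m"
  shows "A / 2 - m * B < 0"
proof -
  have "0 \<le> m * B" "0 < B \<Longrightarrow> 0 < m * B" using assms by simp_all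
  thus ?thesis using assms by linarith
qed

lemma cross2_crossing_chords:
  assumes x: "x = (1/2) *\<^sub>R (A + B)" and xm: "x = (1 - m) *\<^sub>R S + m *\<^sub>R T"
  shows "cross2 (Z - x) (A - S) = cross2 (B - A) (Z - A) / 2 - m * cross2 (T - S) (Z - S)"
    and "cross2 (Z - x) (T - B) = cross2 (B - A) (Z - A) / 2 - (1 - m) * cross2 (T - S) (Z - S)"
proof -
  have "cross2 (Z - x) (A - x) = cross2 (B - A) (Z - A) / 2" "cross2 (Z - x) (B - x) = - cross2 (B - A) (Z - A) / 2"
    unfolding x by (simp_all add: cross2_def algebra_simps)
  moreover have "cross2 (Z - x) (S - x) = m * cross2 (T - S) (Z - S)"
    "cross2 (Z - x) (T - x) = - (1 - m) * cross2 (T - S) (Z - S)"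
    unfolding xm by (simp_all add: cross2_def algebra_simps)
  moreover have "cross2 (Z - x) (A - S) = cross2 (Z - x) (A - x) - cross2 (Z - x) (S - x)"
    "cross2 (Z - x) (T - B) = cross2 (Z - x) (T - x) - cross2 (Z - x) (B - x)"
    by (simp_all add: cross2_def algebra_simps)
  ultimately show "cross2 (Z - x) (A - S) = cross2 (B - A) (Z - A) / 2 - m * cross2 (T - S) (Z - S)"
    "cross2 (Z - x) (T - B) = cross2 (B - A) (Z - A) / 2 - (1 - m) * cross2 (T - S) (Z - S)"
    by (simp_all add: algebra_simps)
qed

lemma increasing_reparametrisation:
  fixes \<sigma> \<Phi> \<sigma>' \<Phi>' :: "real \<Rightarrow> real"
  assumes "r0 < r1" and cont_\<sigma>: "continuous_on {r0..r1} \<sigma>"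
    and deriv_\<sigma>: "\<And>\<rho>. r0 < \<rho> \<Longrightarrow> \<rho> < r1 \<Longrightarrow> DERIV \<sigma> \<rho> :> \<sigma>' \<rho> \<and> \<sigma>' \<rho> > 0"
    and cont_\<Phi>: "continuous_on {r0..r1} \<Phi>"
    and deriv_\<Phi>: "\<And>\<rho>. r0 < \<rho> \<Longrightarrow> \<rho> < r1 \<Longrightarrow> DERIV \<Phi> \<rho> :> \<Phi>' \<rho>"
  obtains g where "\<sigma> r0 < \<sigma> r1" "g (\<sigma> r0) = r0" "g (\<sigma> r1) = r1"
    "\<And>z. z \<in> {\<sigma> r0..\<sigma> r1} \<Longrightarrow> g z \<in> {r0..r1} \<and> \<sigma> (g z) = z"
    "continuous_on {\<sigma> r0..\<sigma> r1} (\<Phi> \<circ> g)"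
    "\<And>z. \<sigma> r0 < z \<Longrightarrow> z < \<sigma> r1 \<Longrightarrow> DERIV (\<Phi> \<circ> g) z :> \<Phi>' (g z) / \<sigma>' (g z)"
proof -
  have mono: "\<sigma> a < \<sigma> b" if "r0 \<le> a" "a < b" "b \<le> r1" for a b
  proof (rule DERIV_pos_imp_increasing_open[OF that(2)])
    show "\<And>x. a < x \<Longrightarrow> x < b \<Longrightarrow> \<exists>y. DERIV \<sigma> x :> y \<and> 0 < y" using deriv_\<sigma> that by force
    show "continuous_on {a..b} \<sigma>" using continuous_on_subset[OF cont_\<sigma>] that by auto
  qed
  have inj: "inj_on \<sigma> {r0..r1}"
    by (rule inj_onI) (metis atLeastAtMost_iff linorder_neqE_linordered_idom mono order_less_irrefl)
  have img: "\<sigma> ` {r0..r1} = {\<sigma> r0..\<sigma> r1}"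
  proof
    show "\<sigma> ` {r0..r1} \<subseteq> {\<sigma> r0..\<sigma> r1}"
      using mono \<open>r0 < r1\<close> by (auto simp: order_le_less)
    show "{\<sigma> r0..\<sigma> r1} \<subseteq> \<sigma> ` {r0..r1}"
    proof
      fix z assume "z \<in> {\<sigma> r0..\<sigma> r1}"
      then obtain x where "r0 \<le> x" "x \<le> r1" "\<sigma> x = z"
        using IVT'[of \<sigma> r0 z r1] cont_\<sigma> \<open>r0 < r1\<close> by auto
      thus "z \<in> \<sigma> ` {r0..r1}" by auto
    qed
  qed
  define g where "g = the_inv_into {r0..r1} \<sigma>"
  have g_inverse: "g z \<in> {r0..r1} \<and> \<sigma> (g z) = z" if "z \<in> {\<sigma> r0..\<sigma> r1}" for z
    using that img inj unfolding g_def by (metis f_the_inv_into_f the_inv_into_into order_refl)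
  have g_\<sigma>: "g (\<sigma> x) = x" if "x \<in> {r0..r1}" for x
    using inj that unfolding g_def by (simp add: the_inv_into_f_f)
  have cont_g: "continuous_on {\<sigma> r0..\<sigma> r1} g"
    using continuous_on_inv[OF cont_\<sigma> compact_Icc, of g] g_\<sigma> img by auto
  show ?thesis
  proof
    show "\<sigma> r0 < \<sigma> r1" using mono \<open>r0 < r1\<close> by auto
    show "g (\<sigma> r0) = r0" "g (\<sigma> r1) = r1" using g_\<sigma> \<open>r0 < r1\<close> by auto
    show "continuous_on {\<sigma> r0..\<sigma> r1} (\<Phi> \<circ> g)"
      by (rule continuous_on_compose[OF cont_g continuous_on_subset[OF cont_\<Phi>]]) (use g_inverse in auto)
    show "DERIV (\<Phi> \<circ> g) z :> \<Phi>' (g z) / \<sigma>' (g z)" if z: "\<sigma> r0 < z" "z < \<sigma> r1" for z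
    proof -
      have gz: "g z \<in> {r0..r1}" "\<sigma> (g z) = z" using g_inverse z by auto
      hence inside: "r0 < g z" "g z < r1" using z by (auto simp: order_le_less)
      have "DERIV g z :> inverse (\<sigma>' (g z))"
      proof (rule DERIV_inverse_function[where a="\<sigma> r0" and b="\<sigma> r1"])
        show "DERIV \<sigma> (g z) :> \<sigma>' (g z)" "\<sigma>' (g z) \<noteq> 0" using deriv_\<sigma>[OF inside] by auto
        show "isCont g z" using continuous_on_interior[OF cont_g] z by auto
      qed (use z g_inverse in auto)
      from DERIV_chain[OF deriv_\<Phi>[OF inside] this] show ?thesis by (simp add: divide_inverse)
    qed
    show "g z \<in> {r0..r1} \<and> \<sigma> (g z) = z" if "z \<in> {\<sigma> r0..\<sigma> r1}" for z
      using g_inverse[OF that] .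
  qed
qed

lemma increment_less_by_reparametrisation:
  fixes \<sigma> \<Phi> \<sigma>' \<Phi>' :: "real \<Rightarrow> real"
  assumes r: "r0 < r1" "continuous_on {r0..r1} \<sigma>"
      "\<And>\<rho>. r0 < \<rho> \<Longrightarrow> \<rho> < r1 \<Longrightarrow> DERIV \<sigma> \<rho> :> \<sigma>' \<rho> \<and> \<sigma>' \<rho> > 0"
      "continuous_on {r0..r1} \<Phi>" "\<And>\<rho>. r0 < \<rho> \<Longrightarrow> \<rho> < r1 \<Longrightarrow> DERIV \<Phi> \<rho> :> \<Phi>' \<rho>"
    and c: "c0 < c1" "continuous_on {c0..c1} \<sigma>"
      "\<And>\<rho>. c0 < \<rho> \<Longrightarrow> \<rho> < c1 \<Longrightarrow> DERIV \<sigma> \<rho> :> \<sigma>' \<rho> \<and> \<sigma>' \<rho> > 0"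
      "continuous_on {c0..c1} \<Phi>" "\<And>\<rho>. c0 < \<rho> \<Longrightarrow> \<rho> < c1 \<Longrightarrow> DERIV \<Phi> \<rho> :> \<Phi>' \<rho>"
    and start: "\<sigma> r0 = \<sigma> c0" and finish: "\<sigma> r1 = \<sigma> c1"
    and slower: "\<And>\<rho> c. r0 < \<rho> \<Longrightarrow> \<rho> < r1 \<Longrightarrow> c0 < c \<Longrightarrow> c < c1 \<Longrightarrow> \<sigma> \<rho> = \<sigma> c
                   \<Longrightarrow> \<Phi>' \<rho> / \<sigma>' \<rho> < \<Phi>' c / \<sigma>' c"
  shows "\<Phi> r1 - \<Phi> r0 < \<Phi> c1 - \<Phi> c0"
proof -
  obtain gr where gr: "\<sigma> r0 < \<sigma> r1" "gr (\<sigma> r0) = r0" "gr (\<sigma> r1) = r1"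
    "\<And>z. z \<in> {\<sigma> r0..\<sigma> r1} \<Longrightarrow> gr z \<in> {r0..r1} \<and> \<sigma> (gr z) = z"
    "continuous_on {\<sigma> r0..\<sigma> r1} (\<Phi> \<circ> gr)"
    "\<And>z. \<sigma> r0 < z \<Longrightarrow> z < \<sigma> r1 \<Longrightarrow> DERIV (\<Phi> \<circ> gr) z :> \<Phi>' (gr z) / \<sigma>' (gr z)"
    by (rule increasing_reparametrisation[of r0 r1 \<sigma> \<sigma>' \<Phi> \<Phi>', OF r]) (assumption | rule that)+
  obtain gc where gc: "\<sigma> c0 < \<sigma> c1" "gc (\<sigma> c0) = c0" "gc (\<sigma> c1) = c1"
    "\<And>z. z \<in> {\<sigma> c0..\<sigma> c1} \<Longrightarrow> gc z \<in> {c0..c1} \<and> \<sigma> (gc z) = z"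
    "continuous_on {\<sigma> c0..\<sigma> c1} (\<Phi> \<circ> gc)"
    "\<And>z. \<sigma> c0 < z \<Longrightarrow> z < \<sigma> c1 \<Longrightarrow> DERIV (\<Phi> \<circ> gc) z :> \<Phi>' (gc z) / \<sigma>' (gc z)"
    by (rule increasing_reparametrisation[of c0 c1 \<sigma> \<sigma>' \<Phi> \<Phi>', OF c]) (assumption | rule that)+
  have "(\<lambda>z. \<Phi> (gc z) - \<Phi> (gr z)) (\<sigma> r0) < (\<lambda>z. \<Phi> (gc z) - \<Phi> (gr z)) (\<sigma> r1)"
  proof (rule DERIV_pos_imp_increasing_open[OF gr(1)])
    fix z assume z: "\<sigma> r0 < z" "z < \<sigma> r1"
    have "gr z \<in> {r0..r1}" "gc z \<in> {c0..c1}" "\<sigma> (gr z) = \<sigma> (gc z)"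
      using gr(4)[of z] gc(4)[of z] z start finish by auto
    moreover have "gr z \<noteq> r0" "gr z \<noteq> r1" "gc z \<noteq> c0" "gc z \<noteq> c1"
      using gr(4)[of z] gc(4)[of z] z start finish by auto
    ultimately have "\<Phi>' (gr z) / \<sigma>' (gr z) < \<Phi>' (gc z) / \<sigma>' (gc z)"
      by (intro slower) auto
    moreover have "DERIV (\<lambda>z. \<Phi> (gc z) - \<Phi> (gr z)) z :> \<Phi>' (gc z) / \<sigma>' (gc z) - \<Phi>' (gr z) / \<sigma>' (gr z)"
      using DERIV_diff[OF gc(6) gr(6), of z] z start finish by (simp add: o_def)
    ultimately show "\<exists>y. DERIV (\<lambda>z. \<Phi> (gc z) - \<Phi> (gr z)) z :> y \<and> 0 < y"
      by force
  next
    show "continuous_on {\<sigma> r0..\<sigma> r1} (\<lambda>z. \<Phi> (gc z) - \<Phi> (gr z))"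
      using continuous_on_diff[OF gc(5)[unfolded start[symmetric] finish[symmetric]] gr(5)]
      by (simp add: o_def)
  qed
  thus ?thesis using gr(2,3) gc(2,3) start finish by simp
qed

locale convex_C1_arc =
  fixes I :: "real set" and C C' :: "real \<Rightarrow> real \<times> real"
  assumes interval: "is_interval I"
    and C_derivative: "\<And>t. t \<in> I \<Longrightarrow> (C has_vector_derivative C' t) (at t within I)"
    and continuous_C': "continuous_on I C'"
    and left_oriented: "left_oriented I C C'"
    and tangents_not_parallel: "no_parallel_tangents I C'"
begin

lemma continuous_C: "continuous_on I C"
  using C_derivative by (meson continuous_on_eq_continuous_within has_vector_derivative_continuous)

lemma mem_between: "s \<in> I \<Longrightarrow> t \<in> I \<Longrightarrow> s \<le> r \<Longrightarrow> r \<le> t \<Longrightarrow> r \<in> I"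
  using interval by (meson mem_is_interval_1_I)

lemma atLeastAtMost_subset: "s \<in> I \<Longrightarrow> t \<in> I \<Longrightarrow> {s..t} \<subseteq> I"
  using mem_between[of s t] by auto

lemma interior_between:
  assumes "s \<in> I" "t \<in> I" "s < r" "r < t"
  shows "r \<in> interior I"
proof -
  have "{s<..<t} \<subseteq> interior I"
    using atLeastAtMost_subset[OF assms(1,2)] by (intro interior_maximal) auto
  thus ?thesis using assms by auto
qed

lemma C_derivative_interior: "t \<in> interior I \<Longrightarrow> (C has_vector_derivative C' t) (at t)"
  using C_derivative at_within_interior interior_subset by (metis subsetD)

lemma left_of_tangent: "s \<in> I \<Longrightarrow> t \<in> I \<Longrightarrow> cross2 (C' t) (C s - C t) \<ge> 0"
  using left_oriented unfolding left_oriented_def by auto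

lemma cross2_C_mean_value:
  assumes "s \<in> I" "t \<in> I" "s < t"
  obtains \<xi> where "s < \<xi>" "\<xi> < t" "\<xi> \<in> I" "cross2 d (C t - C s) = (t - s) * cross2 d (C' \<xi>)"
proof -
  have "continuous_on {s..t} (\<lambda>r. cross2 d (C r))"
    using continuous_on_subset[OF continuous_C atLeastAtMost_subset[OF assms(1,2)]]
    by (intro bounded_bilinear.continuous_on[OF bounded_bilinear_cross2]) auto
  moreover have "((\<lambda>r. cross2 d (C r)) has_real_derivative cross2 d (C' r)) (at r)" if "s < r" "r < t" for r
    using bounded_bilinear.has_vector_derivative[OF bounded_bilinear_cross2 has_vector_derivative_const
        C_derivative_interior[OF interior_between[OF assms(1,2) that]], of d]
    by (simp add: has_real_derivative_iff_has_vector_derivative bounded_bilinear.zero_left[OF bounded_bilinear_cross2])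
  ultimately obtain l \<xi> where \<xi>: "s < \<xi>" "\<xi> < t" "DERIV (\<lambda>r. cross2 d (C r)) \<xi> :> l"
      "cross2 d (C t) - cross2 d (C s) = (t - s) * l"
    using MVT[OF assms(3)] real_differentiable_def by meson
  have "l = cross2 d (C' \<xi>)" using DERIV_unique \<xi> \<open>\<And>r. s < r \<Longrightarrow> r < t \<Longrightarrow> _\<close> by blast
  thus ?thesis using that \<xi> mem_between[OF assms(1,2)] by (simp add: cross2_simps)
qed

lemma tangents_turn_left:
  assumes "s \<in> I" "t \<in> I" "s < t"
  shows "cross2 (C' s) (C' t) > 0"
proof (rule ccontr)
  assume "\<not> ?thesis"
  moreover have "cross2 (C' s) (C' t) \<noteq> 0"
    using tangents_not_parallel assms unfolding no_parallel_tangents_def by auto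
  ultimately have neg: "cross2 (C' s) (C' t) < 0" by auto
  obtain \<xi> where \<xi>: "s < \<xi>" "\<xi> < t" "\<xi> \<in> I" "cross2 (C' s) (C t - C s) = (t - s) * cross2 (C' s) (C' \<xi>)"
    using cross2_C_mean_value[OF assms] .
  hence "cross2 (C' s) (C' \<xi>) \<ge> 0"
    using left_of_tangent[OF assms(2,1)] assms(3) by (simp add: zero_le_mult_iff)
  moreover have "continuous_on {\<xi>..t} (\<lambda>r. cross2 (C' s) (C' r))"
    using continuous_on_subset[OF continuous_C' atLeastAtMost_subset[OF \<xi>(3) assms(2)]]
    by (intro bounded_bilinear.continuous_on[OF bounded_bilinear_cross2]) auto
  ultimately obtain r where r: "\<xi> \<le> r" "r \<le> t" "cross2 (C' s) (C' r) = 0"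
    using IVT2'[of "\<lambda>r. cross2 (C' s) (C' r)" t 0 \<xi>] neg \<xi> by auto
  have "r \<in> I" using r mem_between[OF \<xi>(3) assms(2)] by auto
  thus False using tangents_not_parallel r \<xi> assms unfolding no_parallel_tangents_def by auto
qed

lemma tangent_cross_later_chord:
  assumes "c \<in> I" "s \<in> I" "t \<in> I" "c \<le> s" "s < t"
  shows "cross2 (C' c) (C t - C s) > 0"
proof -
  obtain \<xi> where "s < \<xi>" "\<xi> \<in> I" "cross2 (C' c) (C t - C s) = (t - s) * cross2 (C' c) (C' \<xi>)"
    using cross2_C_mean_value[OF assms(2,3,5)] .
  thus ?thesis using tangents_turn_left[of c \<xi>] assms by simp
qed

lemma tangent_cross_earlier_chord:
  assumes "c \<in> I" "s \<in> I" "t \<in> I" "t \<le> c" "s < t"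
  shows "cross2 (C' c) (C t - C s) < 0"
proof -
  obtain \<xi> where "\<xi> < t" "\<xi> \<in> I" "cross2 (C' c) (C t - C s) = (t - s) * cross2 (C' c) (C' \<xi>)"
    using cross2_C_mean_value[OF assms(2,3,5)] .
  thus ?thesis using tangents_turn_left[of \<xi> c] assms
    by (simp add: cross2_commute[of "C' c"] mult_pos_neg)
qed

lemma strictly_left_of_tangent:
  assumes "c \<in> I" "s \<in> I" "s \<noteq> c"
  shows "cross2 (C' c) (C s - C c) > 0"
proof (cases "c < s")
  case True thus ?thesis using tangent_cross_later_chord[OF assms(1,1,2)] by auto
next
  case False
  hence "cross2 (C' c) (C c - C s) < 0" using tangent_cross_earlier_chord[OF assms(1,2,1)] assms by auto
  thus ?thesis by (simp add: cross2_simps)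
qed

lemma C_inj: "a \<in> I \<Longrightarrow> b \<in> I \<Longrightarrow> C a = C b \<Longrightarrow> a = b"
  using strictly_left_of_tangent[of a b] by (auto simp: cross2_simps)

abbreviation chord_side :: "real \<Rightarrow> real \<Rightarrow> real \<Rightarrow> real" where
  "chord_side a b r \<equiv> cross2 (C b - C a) (C r - C a)"

lemma chord_side_inside:
  assumes "a \<in> I" "b \<in> I" "a < r" "r < b"
  shows "chord_side a b r < 0"
proof -
  have rI: "r \<in> I" using mem_between[OF assms(1,2)] assms by auto
  obtain \<xi> where \<xi>: "a < \<xi>" "\<xi> < r" "\<xi> \<in> I"
      "cross2 (C b - C r) (C r - C a) = (r - a) * cross2 (C b - C r) (C' \<xi>)"
    using cross2_C_mean_value[OF assms(1) rI assms(3)] .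
  have "cross2 (C' \<xi>) (C b - C r) > 0" using tangent_cross_later_chord[OF \<xi>(3) rI assms(2)] \<xi> assms by auto
  hence "cross2 (C b - C r) (C r - C a) < 0"
    using \<xi> assms by (simp add: cross2_commute[of "C b - C r"] mult_pos_neg)
  moreover have "chord_side a b r = cross2 (C b - C r) (C r - C a)"
    by (simp add: cross2_def algebra_simps)
  ultimately show ?thesis by simp
qed

lemma chord_side_after:
  assumes "a \<in> I" "b \<in> I" "r \<in> I" "a < b" "b < r"
  shows "chord_side a b r > 0"
proof -
  obtain \<xi> where \<xi>: "b < \<xi>" "\<xi> < r" "\<xi> \<in> I"
      "cross2 (C b - C a) (C r - C b) = (r - b) * cross2 (C b - C a) (C' \<xi>)"
    using cross2_C_mean_value[OF assms(2,3,5)] .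
  have "cross2 (C' \<xi>) (C b - C a) < 0" using tangent_cross_earlier_chord[OF \<xi>(3) assms(1,2)] \<xi> assms by auto
  hence "cross2 (C b - C a) (C r - C b) > 0" using \<xi> assms by (simp add: cross2_commute[of "C b - C a"] mult_pos_neg)
  moreover have "chord_side a b r = cross2 (C b - C a) (C r - C b)"
    by (simp add: cross2_def algebra_simps)
  ultimately show ?thesis by simp
qed

lemma chord_side_before:
  assumes "a \<in> I" "b \<in> I" "r \<in> I" "a < b" "r < a"
  shows "chord_side a b r > 0"
proof -
  obtain \<xi> where \<xi>: "r < \<xi>" "\<xi> < a" "\<xi> \<in> I"
      "cross2 (C b - C a) (C a - C r) = (a - r) * cross2 (C b - C a) (C' \<xi>)"
    using cross2_C_mean_value[OF assms(3,1,5)] .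
  have "cross2 (C' \<xi>) (C b - C a) > 0" using tangent_cross_later_chord[OF \<xi>(3) assms(1,2)] \<xi> assms by auto
  hence "cross2 (C b - C a) (C a - C r) < 0"
    using \<xi> by (simp add: cross2_commute[of "C b - C a"] mult_pos_neg)
  thus ?thesis by (simp add: cross2_simps)
qed

lemma chord_side_sign:
  assumes "a \<in> I" "b \<in> I" "r \<in> I" "a < b"
  shows chord_side_neg_iff: "chord_side a b r < 0 \<longleftrightarrow> a < r \<and> r < b"
    and chord_side_pos_iff: "chord_side a b r > 0 \<longleftrightarrow> r < a \<or> b < r"
proof -
  have "chord_side a b a = 0" "chord_side a b b = 0" by (simp_all add: cross2_simps)
  with chord_side_inside[OF assms(1,2), of r] chord_side_before[OF assms] chord_side_after[OF assms]
  show "chord_side a b r < 0 \<longleftrightarrow> a < r \<and> r < b" "chord_side a b r > 0 \<longleftrightarrow> r < a \<or> b < r"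
    using assms(4) by (cases r a rule: linorder_cases; cases r b rule: linorder_cases; simp)+
qed

lemma midpoint_strictly_left_of_tangent:
  assumes "a \<in> I" "b \<in> I" "a \<noteq> b" "r \<in> I"
  shows "cross2 (C r - (1/2) *\<^sub>R (C a + C b)) (C' r) > 0"
proof -
  have "cross2 (C r - (1/2) *\<^sub>R (C a + C b)) (C' r)
      = (cross2 (C' r) (C a - C r) + cross2 (C' r) (C b - C r)) / 2"
    by (simp add: cross2_def algebra_simps)
  moreover have "cross2 (C' r) (C a - C r) > 0 \<or> cross2 (C' r) (C b - C r) > 0"
    using strictly_left_of_tangent[OF assms(4)] assms by (cases "a = r") auto
  ultimately show ?thesis
    using left_of_tangent[OF assms(1,4)] left_of_tangent[OF assms(2,4)] by auto
qed

text \<open>Up to a constant, twice the signed area swept by the segment from \<open>x\<close> to \<open>C \<rho>\<close>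
  as \<open>\<rho>\<close> runs from \<open>lo\<close> to \<open>r\<close>.\<close>
definition swept_area :: "real \<times> real \<Rightarrow> real \<Rightarrow> real \<Rightarrow> real" where
  "swept_area x lo r = integral {lo..r} (\<lambda>\<rho>. cross2 (C \<rho>) (C' \<rho>)) - cross2 x (C r)"

lemma continuous_on_cross2_C_C': "continuous_on I (\<lambda>\<rho>. cross2 (C \<rho>) (C' \<rho>))"
  by (rule bounded_bilinear.continuous_on[OF bounded_bilinear_cross2 continuous_C continuous_C'])

lemma continuous_on_swept_area:
  assumes "lo \<in> I" "hi \<in> I"
  shows "continuous_on {lo..hi} (swept_area x lo)"
proof -
  have sub: "{lo..hi} \<subseteq> I" using atLeastAtMost_subset assms .
  have "continuous_on {lo..hi} (\<lambda>r. integral {lo..r} (\<lambda>\<rho>. cross2 (C \<rho>) (C' \<rho>)))"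
    by (intro indefinite_integral_continuous_1 integrable_continuous_real
        continuous_on_subset[OF continuous_on_cross2_C_C' sub])
  moreover have "continuous_on {lo..hi} (\<lambda>r. cross2 x (C r))"
    by (rule bounded_bilinear.continuous_on[OF bounded_bilinear_cross2 continuous_on_const
          continuous_on_subset[OF continuous_C sub]])
  ultimately show ?thesis unfolding swept_area_def by (intro continuous_on_diff)
qed

lemma swept_area_derivative:
  assumes "lo \<in> I" "r \<in> interior I" "lo < r"
  shows "DERIV (swept_area x lo) r :> cross2 (C r - x) (C' r)"
proof -
  obtain e where e: "e > 0" "ball r e \<subseteq> interior I"
    using assms(2) open_interior open_contains_ball by blast
  have "r + e/2 \<in> I" using e interior_subset by (force simp: dist_real_def)
  hence sub: "{lo..r + e/2} \<subseteq> I" using atLeastAtMost_subset[OF assms(1)] by blast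
  have r_in: "r \<in> interior {lo..r + e/2}" using assms e by auto
  have "((\<lambda>r. integral {lo..r} (\<lambda>\<rho>. cross2 (C \<rho>) (C' \<rho>))) has_real_derivative cross2 (C r) (C' r))
      (at r within {lo..r + e/2})"
    by (rule integral_has_real_derivative)
       (use continuous_on_subset[OF continuous_on_cross2_C_C' sub] r_in in auto)
  hence "((\<lambda>r. integral {lo..r} (\<lambda>\<rho>. cross2 (C \<rho>) (C' \<rho>))) has_real_derivative cross2 (C r) (C' r)) (at r)"
    using at_within_interior[OF r_in] by simp
  moreover have "((\<lambda>r. cross2 x (C r)) has_real_derivative cross2 x (C' r)) (at r)"
    using bounded_bilinear.has_vector_derivative[OF bounded_bilinear_cross2 has_vector_derivative_const
        C_derivative_interior[OF assms(2)], of x]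
    by (simp add: has_real_derivative_iff_has_vector_derivative bounded_bilinear.zero_left[OF bounded_bilinear_cross2])
  ultimately have "DERIV (swept_area x lo) r :> cross2 (C r) (C' r) - cross2 x (C' r)"
    unfolding swept_area_def[abs_def] by (rule DERIV_diff)
  thus ?thesis by (simp add: cross2_simps)
qed

lemma chord_area_swept_area:
  assumes "lo \<in> I" "t \<in> I" "lo \<le> s" "s \<le> t"
  shows "chord_area C C' s t
    = (swept_area x lo t - swept_area x lo s - cross2 (C s - x) (C t - x)) / 2"
proof -
  have sI: "s \<in> I" using mem_between[OF assms(1,2)] assms by auto
  have sub: "{s..t} \<subseteq> I" using atLeastAtMost_subset[OF sI assms(2)] .
  have "((\<lambda>r. cross2 (C s) (C' r)) has_integral cross2 (C s) (C t) - cross2 (C s) (C s)) {s..t}"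
  proof (rule fundamental_theorem_of_calculus[OF assms(4)])
    fix r assume "r \<in> {s..t}"
    with sub show "((\<lambda>r. cross2 (C s) (C r)) has_vector_derivative cross2 (C s) (C' r)) (at r within {s..t})"
      using bounded_bilinear.has_vector_derivative[OF bounded_bilinear_cross2 has_vector_derivative_const
          has_vector_derivative_within_subset[OF C_derivative sub], of r "C s"]
      by (auto simp: bounded_bilinear.zero_left[OF bounded_bilinear_cross2])
  qed
  moreover have "((\<lambda>\<rho>. cross2 (C \<rho>) (C' \<rho>)) has_integral integral {s..t} (\<lambda>\<rho>. cross2 (C \<rho>) (C' \<rho>))) {s..t}"
    by (intro integrable_integral integrable_continuous_real continuous_on_subset[OF continuous_on_cross2_C_C' sub])
  ultimately have "((\<lambda>\<rho>. cross2 (C \<rho>) (C' \<rho>) - cross2 (C s) (C' \<rho>)) has_integral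
      integral {s..t} (\<lambda>\<rho>. cross2 (C \<rho>) (C' \<rho>)) - (cross2 (C s) (C t) - cross2 (C s) (C s))) {s..t}"
    by (rule has_integral_diff[rotated])
  hence "((\<lambda>\<rho>. cross2 (C \<rho> - C s) (C' \<rho>)) has_integral
      integral {s..t} (\<lambda>\<rho>. cross2 (C \<rho>) (C' \<rho>)) - cross2 (C s) (C t)) {s..t}"
    by (simp add: cross2_simps)
  hence "chord_area C C' s t = (integral {s..t} (\<lambda>\<rho>. cross2 (C \<rho>) (C' \<rho>)) - cross2 (C s) (C t)) / 2"
    unfolding chord_area_def by (simp add: integral_unique)
  moreover have "integral {lo..s} (\<lambda>\<rho>. cross2 (C \<rho>) (C' \<rho>)) + integral {s..t} (\<lambda>\<rho>. cross2 (C \<rho>) (C' \<rho>))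
      = integral {lo..t} (\<lambda>\<rho>. cross2 (C \<rho>) (C' \<rho>))"
    by (intro Henstock_Kurzweil_Integration.integral_combine integrable_continuous_real
        continuous_on_subset[OF continuous_on_cross2_C_C' atLeastAtMost_subset[OF assms(1,2)]])
       (use assms in auto)
  ultimately show ?thesis unfolding swept_area_def by (simp add: cross2_def algebra_simps)
qed

text \<open>The cotangent of the angle from \<open>e\<close> to \<open>C r - x\<close>.\<close>
definition view_cot :: "real \<times> real \<Rightarrow> real \<times> real \<Rightarrow> real \<Rightarrow> real" where
  "view_cot x e r = ((C r - x) \<bullet> e) / cross2 (C r - x) e"

lemma view_cot_eq_iff:
  assumes "e \<noteq> 0" "cross2 (C a - x) e \<noteq> 0" "cross2 (C b - x) e \<noteq> 0"
  shows "view_cot x e a = view_cot x e b \<longleftrightarrow> cross2 (C a - x) (C b - x) = 0"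
proof -
  have "view_cot x e a = view_cot x e b
      \<longleftrightarrow> ((C a - x) \<bullet> e) * cross2 (C b - x) e - ((C b - x) \<bullet> e) * cross2 (C a - x) e = 0"
    unfolding view_cot_def using assms by (simp add: field_simps)
  also have "\<dots> \<longleftrightarrow> cross2 (C a - x) (C b - x) = 0"
    unfolding inner_cross2_identity using assms(1) by (simp add: cross2_commute[of "C b - x"])
  finally show ?thesis .
qed

lemma continuous_on_view_cot:
  assumes "a \<in> I" "b \<in> I" "\<And>\<rho>. \<rho> \<in> {a..b} \<Longrightarrow> cross2 (C \<rho> - x) e \<noteq> 0"
  shows "continuous_on {a..b} (view_cot x e)"
proof -
  have "continuous_on {a..b} (\<lambda>r. C r - x)"
    using continuous_on_subset[OF continuous_C atLeastAtMost_subset[OF assms(1,2)]] by (intro continuous_intros)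
  thus ?thesis unfolding view_cot_def[abs_def] using assms(3)
    by (intro continuous_on_divide continuous_on_inner continuous_on_const
        bounded_linear.continuous_on[OF bounded_bilinear.bounded_linear_left[OF bounded_bilinear_cross2]]) auto
qed

lemma view_cot_derivative:
  assumes "r \<in> interior I" "cross2 (C r - x) e \<noteq> 0"
  shows "DERIV (view_cot x e) r :> (e \<bullet> e) * cross2 (C r - x) (C' r) / (cross2 (C r - x) e)\<^sup>2"
proof -
  have "((\<lambda>r. C r - x) has_vector_derivative C' r) (at r)"
    using C_derivative_interior[OF assms(1)] by (auto intro: derivative_eq_intros)
  hence "DERIV (\<lambda>r. (C r - x) \<bullet> e) r :> C' r \<bullet> e" "DERIV (\<lambda>r. cross2 (C r - x) e) r :> cross2 (C' r) e"
    using bounded_linear.has_vector_derivative[OF bounded_linear_inner_left, of _ _ _ e]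
      bounded_linear.has_vector_derivative[OF bounded_bilinear.bounded_linear_left[OF bounded_bilinear_cross2],
        of _ _ _ e]
    by (auto simp: has_real_derivative_iff_has_vector_derivative)
  from DERIV_divide[OF this assms(2)] show ?thesis
    unfolding view_cot_def[abs_def] inner_cross2_identity by (simp add: power2_eq_square)
qed

text \<open>Reparametrised by \<open>view_cot x e\<close>, the swept area grows like the squared distance of the curve
  to the line through \<open>x\<close> with direction \<open>e\<close>; \<open>farther\<close> says that the second arc is the farther
  one along every line through \<open>x\<close>.\<close>
lemma swept_area_less_on_nearer_arc:
  assumes I: "lo \<in> I" "r0 \<in> I" "r1 \<in> I" "c0 \<in> I" "c1 \<in> I"
    and ord: "lo \<le> r0" "lo \<le> c0" "r0 < r1" "c0 < c1"
    and around: "\<And>\<rho>. \<rho> \<in> I \<Longrightarrow> cross2 (C \<rho> - x) (C' \<rho>) > 0"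
    and near_side: "\<And>\<rho>. \<rho> \<in> {r0..r1} \<Longrightarrow> cross2 (C \<rho> - x) e < 0"
    and far_side: "\<And>\<rho>. \<rho> \<in> {c0..c1} \<Longrightarrow> cross2 (C \<rho> - x) e > 0"
    and start: "cross2 (C r0 - x) (C c0 - x) = 0" and finish: "cross2 (C r1 - x) (C c1 - x) = 0"
    and farther: "\<And>\<rho> c. r0 < \<rho> \<Longrightarrow> \<rho> < r1 \<Longrightarrow> c0 < c \<Longrightarrow> c < c1 \<Longrightarrow> cross2 (C \<rho> - x) (C c - x) = 0
              \<Longrightarrow> cross2 (C' c) (- ((C \<rho> - x) + (C c - x))) > 0"
  shows "swept_area x lo r1 - swept_area x lo r0 < swept_area x lo c1 - swept_area x lo c0"
proof -
  define \<sigma> where "\<sigma> = view_cot x e"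
  define \<sigma>' where "\<sigma>' r = (e \<bullet> e) * cross2 (C r - x) (C' r) / (cross2 (C r - x) e)\<^sup>2" for r
  have "e \<noteq> 0" using near_side[of r0] ord by (auto simp: cross2_simps)
  hence ee: "e \<bullet> e > 0" by simp
  have same_\<sigma>: "\<sigma> a = \<sigma> b \<longleftrightarrow> cross2 (C a - x) (C b - x) = 0"
    if "cross2 (C a - x) e \<noteq> 0" "cross2 (C b - x) e \<noteq> 0" for a b
    unfolding \<sigma>_def by (rule view_cot_eq_iff[OF \<open>e \<noteq> 0\<close> that])
  have deriv_\<sigma>: "DERIV \<sigma> \<rho> :> \<sigma>' \<rho> \<and> \<sigma>' \<rho> > 0"
    if "a \<in> I" "b \<in> I" "a < \<rho>" "\<rho> < b" "cross2 (C \<rho> - x) e \<noteq> 0" for a b \<rho>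
    unfolding \<sigma>_def \<sigma>'_def
    using view_cot_derivative[OF interior_between[OF that(1-4)] that(5)]
      around[OF mem_between[OF that(1,2)]] ee that by simp
  have deriv_swept: "DERIV (swept_area x lo) \<rho> :> cross2 (C \<rho> - x) (C' \<rho>)"
    if "a \<in> I" "b \<in> I" "lo \<le> a" "a < \<rho>" "\<rho> < b" for a b \<rho>
    using swept_area_derivative[OF I(1) interior_between[OF that(1,2,4,5)]] that by simp
  show ?thesis
  proof (rule increment_less_by_reparametrisation[where \<Phi> = "swept_area x lo" and \<sigma> = \<sigma> and \<sigma>' = \<sigma>'])
    show "continuous_on {r0..r1} \<sigma>" unfolding \<sigma>_def
      by (rule continuous_on_view_cot[OF I(2,3)]) (use near_side in force)
    show "continuous_on {c0..c1} \<sigma>" unfolding \<sigma>_def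
      by (rule continuous_on_view_cot[OF I(4,5)]) (use far_side in force)
    show "DERIV \<sigma> \<rho> :> \<sigma>' \<rho> \<and> \<sigma>' \<rho> > 0" if "r0 < \<rho>" "\<rho> < r1" for \<rho>
      using deriv_\<sigma>[OF I(2,3) that] near_side[of \<rho>] that by force
    show "DERIV \<sigma> \<rho> :> \<sigma>' \<rho> \<and> \<sigma>' \<rho> > 0" if "c0 < \<rho>" "\<rho> < c1" for \<rho>
      using deriv_\<sigma>[OF I(4,5) that] far_side[of \<rho>] that by force
    show "continuous_on {r0..r1} (swept_area x lo)" "continuous_on {c0..c1} (swept_area x lo)"
      using continuous_on_subset[OF continuous_on_swept_area[OF I(1,3)], of "{r0..r1}"]
        continuous_on_subset[OF continuous_on_swept_area[OF I(1,5)], of "{c0..c1}"] ord by auto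
    show "DERIV (swept_area x lo) \<rho> :> cross2 (C \<rho> - x) (C' \<rho>)" if "r0 < \<rho>" "\<rho> < r1" for \<rho>
      using deriv_swept[OF I(2,3)] ord that by auto
    show "DERIV (swept_area x lo) \<rho> :> cross2 (C \<rho> - x) (C' \<rho>)" if "c0 < \<rho>" "\<rho> < c1" for \<rho>
      using deriv_swept[OF I(4,5)] ord that by auto
    show "\<sigma> r0 = \<sigma> c0" "\<sigma> r1 = \<sigma> c1"
      using same_\<sigma> start finish near_side far_side ord by (metis atLeastAtMost_iff less_irrefl order_le_less)+
    show "cross2 (C \<rho> - x) (C' \<rho>) / \<sigma>' \<rho> < cross2 (C c - x) (C' c) / \<sigma>' c"
      if "r0 < \<rho>" "\<rho> < r1" "c0 < c" "c < c1" "\<sigma> \<rho> = \<sigma> c" for \<rho> c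
    proof -
      have \<rho>I: "\<rho> \<in> I" and cI: "c \<in> I"
        using mem_between[OF I(2,3)] mem_between[OF I(4,5)] that by auto
      have near: "cross2 (C \<rho> - x) e < 0" and far: "cross2 (C c - x) e > 0"
        using near_side far_side that by auto
      have aligned: "cross2 (C \<rho> - x) (C c - x) = 0" using same_\<sigma> near far that(5) by simp
      have "(cross2 (C \<rho> - x) e)\<^sup>2 < (cross2 (C c - x) e)\<^sup>2"
        using cross2_sq_less_on_opposite_rays[OF aligned near far farther[OF that(1-4) aligned] around[OF cI]] .
      moreover have "cross2 (C r - x) (C' r) / \<sigma>' r = (cross2 (C r - x) e)\<^sup>2 / (e \<bullet> e)"
        if "r \<in> I" "cross2 (C r - x) e \<noteq> 0" for r
        using around[OF that(1)] that(2) ee unfolding \<sigma>'_def by (simp add: field_simps)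
      ultimately show ?thesis using \<rho>I cI near far ee by (simp add: divide_strict_right_mono)
    qed
  qed (use ord in auto)
qed

lemma midpoint_chord_less_than_later_chord:
  assumes ab: "a \<in> I" "b \<in> I" and st: "s \<in> I" "t \<in> I" and ord: "a < s" "s < b" "b < t"
    and x: "x = (1/2) *\<^sub>R (C a + C b)" and xm: "x = (1 - m) *\<^sub>R C s + m *\<^sub>R C t" and m: "0 < m"
  shows "chord_area C C' a b < chord_area C C' s t"
proof -
  have ab_x: "cross2 (C a - x) (C b - x) = 0" unfolding x by (simp add: cross2_def algebra_simps)
  have st_x: "cross2 (C s - x) (C t - x) = 0" unfolding xm by (simp add: cross2_def algebra_simps)
  have side: "cross2 (C \<rho> - x) (C a - C s) = chord_side a b \<rho> / 2 - m * chord_side s t \<rho>" for \<rho>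
    using cross2_crossing_chords(1)[OF x xm] .
  have "swept_area x a s - swept_area x a a < swept_area x a t - swept_area x a b"
  proof (rule swept_area_less_on_nearer_arc[where e = "C a - C s"])
    show "cross2 (C \<rho> - x) (C' \<rho>) > 0" if "\<rho> \<in> I" for \<rho>
      using midpoint_strictly_left_of_tangent[OF ab _ that] ord x by auto
    show "cross2 (C \<rho> - x) (C a - C s) < 0" if "\<rho> \<in> {a..s}" for \<rho>
    proof -
      have \<rho>I: "\<rho> \<in> I" using that mem_between[OF ab(1) st(1)] by auto
      show ?thesis unfolding side
        using chord_side_sign[OF ab \<rho>I] chord_side_sign[OF st \<rho>I] that ord m
        by (intro sub_scaled_neg) auto
    qed
    show "cross2 (C \<rho> - x) (C a - C s) > 0" if "\<rho> \<in> {b..t}" for \<rho>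
    proof -
      have \<rho>I: "\<rho> \<in> I" using that mem_between[OF ab(2) st(2)] by auto
      have "- chord_side a b \<rho> / 2 - m * - chord_side s t \<rho> < 0"
        using chord_side_sign[OF ab \<rho>I] chord_side_sign[OF st \<rho>I] that ord m
        by (intro sub_scaled_neg) auto
      thus ?thesis unfolding side by simp
    qed
    show "cross2 (C a - x) (C b - x) = 0" "cross2 (C s - x) (C t - x) = 0" using ab_x st_x by auto
    show "cross2 (C' c) (- ((C \<rho> - x) + (C c - x))) > 0"
      if "a < \<rho>" "\<rho> < s" "b < c" "c < t" for \<rho> c
    proof -
      have \<rho>I: "\<rho> \<in> I" and cI: "c \<in> I"
        using mem_between[OF ab(1) st(1)] mem_between[OF ab(2) st(2)] that by auto
      have eq: "- ((C \<rho> - x) + (C c - x)) = (C b - C c) - (C \<rho> - C a)"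
        unfolding x by (simp add: prod_eq_iff field_simps)
      have "cross2 (C' c) (C \<rho> - C a) < 0"
        using tangent_cross_earlier_chord[OF cI ab(1) \<rho>I] that ord by auto
      hence "cross2 (C' c) ((C b - C c) - (C \<rho> - C a)) > 0"
        using left_of_tangent[OF ab(2) cI] by (simp only: cross2_simps)
      thus ?thesis unfolding eq .
    qed
  qed (use ab st ord in auto)
  moreover have "chord_area C C' a b = (swept_area x a b - swept_area x a a) / 2"
    using chord_area_swept_area[OF ab(1,2), of a x] ab_x ord by simp
  moreover have "chord_area C C' s t = (swept_area x a t - swept_area x a s) / 2"
    using chord_area_swept_area[OF ab(1) st(2), of s x] st_x ord by simp
  ultimately show ?thesis by simp
qed

lemma midpoint_chord_less_than_earlier_chord:
  assumes ab: "a \<in> I" "b \<in> I" and st: "s \<in> I" "t \<in> I" and ord: "s < a" "a < t" "t < b"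
    and x: "x = (1/2) *\<^sub>R (C a + C b)" and xm: "x = (1 - m) *\<^sub>R C s + m *\<^sub>R C t" and m: "m < 1"
  shows "chord_area C C' a b < chord_area C C' s t"
proof -
  have ab_x: "cross2 (C b - x) (C a - x) = 0" unfolding x by (simp add: cross2_def algebra_simps)
  have st_x: "cross2 (C t - x) (C s - x) = 0" unfolding xm by (simp add: cross2_def algebra_simps)
  have side: "cross2 (C \<rho> - x) (C t - C b) = chord_side a b \<rho> / 2 - (1 - m) * chord_side s t \<rho>" for \<rho>
    using cross2_crossing_chords(2)[OF x xm] .
  have "swept_area x s b - swept_area x s t < swept_area x s a - swept_area x s s"
  proof (rule swept_area_less_on_nearer_arc[where e = "C t - C b"])
    show "cross2 (C \<rho> - x) (C' \<rho>) > 0" if "\<rho> \<in> I" for \<rho>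
      using midpoint_strictly_left_of_tangent[OF ab _ that] ord x by auto
    show "cross2 (C \<rho> - x) (C t - C b) < 0" if "\<rho> \<in> {t..b}" for \<rho>
    proof -
      have \<rho>I: "\<rho> \<in> I" using that mem_between[OF st(2) ab(2)] by auto
      show ?thesis unfolding side
        using chord_side_sign[OF ab \<rho>I] chord_side_sign[OF st \<rho>I] that ord m
        by (intro sub_scaled_neg) auto
    qed
    show "cross2 (C \<rho> - x) (C t - C b) > 0" if "\<rho> \<in> {s..a}" for \<rho>
    proof -
      have \<rho>I: "\<rho> \<in> I" using that mem_between[OF st(1) ab(1)] by auto
      have "- chord_side a b \<rho> / 2 - (1 - m) * - chord_side s t \<rho> < 0"
        using chord_side_sign[OF ab \<rho>I] chord_side_sign[OF st \<rho>I] that ord m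
        by (intro sub_scaled_neg) auto
      thus ?thesis unfolding side by simp
    qed
    show "cross2 (C t - x) (C s - x) = 0" "cross2 (C b - x) (C a - x) = 0" using ab_x st_x by auto
    show "cross2 (C' c) (- ((C \<rho> - x) + (C c - x))) > 0"
      if "t < \<rho>" "\<rho> < b" "s < c" "c < a" for \<rho> c
    proof -
      have \<rho>I: "\<rho> \<in> I" and cI: "c \<in> I"
        using mem_between[OF st(2) ab(2)] mem_between[OF st(1) ab(1)] that by auto
      have eq: "- ((C \<rho> - x) + (C c - x)) = (C a - C c) + (C b - C \<rho>)"
        unfolding x by (simp add: prod_eq_iff field_simps)
      have "cross2 (C' c) (C b - C \<rho>) > 0"
        using tangent_cross_later_chord[OF cI \<rho>I ab(2)] that ord by auto
      hence "cross2 (C' c) ((C a - C c) + (C b - C \<rho>)) > 0"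
        using left_of_tangent[OF ab(1) cI] by (simp only: cross2_simps)
      thus ?thesis unfolding eq .
    qed
  qed (use ab st ord in auto)
  moreover have "chord_area C C' a b = (swept_area x s b - swept_area x s a) / 2"
    using chord_area_swept_area[OF st(1) ab(2), of a x] ab_x ord by (simp add: cross2_commute[of "C a - x"])
  moreover have "chord_area C C' s t = (swept_area x s t - swept_area x s s) / 2"
    using chord_area_swept_area[OF st(1,2), of s x] st_x ord by (simp add: cross2_commute[of "C s - x"])
  ultimately show ?thesis by simp
qed

lemma midpoint_chord_area_less:
  assumes ab: "a \<in> I" "b \<in> I" "a < b" and x: "x = (1/2) *\<^sub>R (C a + C b)"
    and chord: "chord_through I C x s t" and other: "(s, t) \<noteq> (a, b)"
  shows "chord_area C C' a b < chord_area C C' s t"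
proof -
  have st: "s \<in> I" "t \<in> I" "s < t" and "x \<in> closed_segment (C s) (C t)"
    using chord unfolding chord_through_def by auto
  then obtain m where m: "0 \<le> m" "m \<le> 1" and xm: "x = (1 - m) *\<^sub>R C s + m *\<^sub>R C t"
    unfolding closed_segment_def by auto
  have x_on_ab: "cross2 (C b - C a) (x - C a) = 0" unfolding x by (simp add: cross2_def field_simps)
  have x_off_curve: "x \<noteq> C r" if "r \<in> I" for r
  proof
    assume xr: "x = C r"
    hence "r = a \<or> r = b" using x_on_ab chord_side_sign[OF ab(1,2) that ab(3)] by auto
    hence "C a = C b" using xr x by (auto simp: prod_eq_iff field_simps)
    thus False using C_inj ab by auto
  qed
  have "m \<noteq> 0" "m \<noteq> 1" using x_off_curve[OF st(1)] x_off_curve[OF st(2)] xm by auto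
  hence m_strict: "0 < m" "m < 1" using m by auto
  note sides = chord_side_sign[OF ab(1,2) st(1) ab(3)] chord_side_sign[OF ab(1,2) st(2) ab(3)]
  have "(1 - m) * chord_side a b s + m * chord_side a b t = 0"
    using x_on_ab unfolding xm by (simp add: cross2_def algebra_simps)
  define k where "k = (1 - m) / m"
  have "k > 0" using m_strict unfolding k_def by simp
  have t_side: "chord_side a b t = - (k * chord_side a b s)"
    using \<open>(1 - m) * _ + _ = 0\<close> m_strict unfolding k_def by (simp add: field_simps)
  hence "chord_side a b t < 0 \<longleftrightarrow> chord_side a b s > 0" "chord_side a b t > 0 \<longleftrightarrow> chord_side a b s < 0"
    using \<open>k > 0\<close> by (simp_all add: zero_less_mult_iff mult_less_0_iff)
  then consider "chord_side a b s = 0" "chord_side a b t = 0"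
    | "chord_side a b s < 0" "chord_side a b t > 0" | "chord_side a b s > 0" "chord_side a b t < 0"
    by (cases "chord_side a b s" "0::real" rule: linorder_cases) (auto simp: t_side)
  thus ?thesis
  proof cases
    case 1
    thus ?thesis using sides st(3) ab(3) other by auto
  next
    case 2
    hence "a < s" "s < b" "b < t" using sides st(3) by auto
    thus ?thesis using midpoint_chord_less_than_later_chord ab st x xm m_strict by blast
  next
    case 3
    hence "s < a" "a < t" "t < b" using sides st(3) by auto
    thus ?thesis using midpoint_chord_less_than_earlier_chord ab st x xm m_strict by blast
  qed
qed

lemma midpoint_chord_through:
  assumes "a \<in> I" "b \<in> I" "a < b"
  shows "chord_through I C ((1/2) *\<^sub>R (C a + C b)) a b"
  unfolding chord_through_def using assms midpoint_in_closed_segment[of "C a" "C b"]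
  by (simp add: midpoint_def)

lemma area_distance_midpoint:
  assumes "a \<in> I" "b \<in> I" "a < b"
  shows "area_distance I C C' ((1/2) *\<^sub>R (C a + C b)) = chord_area C C' a b / 2"
proof -
  have "Inf {chord_area C C' s t | s t. chord_through I C ((1/2) *\<^sub>R (C a + C b)) s t} = chord_area C C' a b"
  proof (rule cInf_eq_minimum)
    show "chord_area C C' a b \<le> y" if "y \<in> {chord_area C C' s t | s t. chord_through I C ((1/2) *\<^sub>R (C a + C b)) s t}" for y
      using that midpoint_chord_area_less[OF assms refl] by (force simp: less_imp_le)
  qed (use midpoint_chord_through[OF assms] in blast)
  thus ?thesis unfolding area_distance_def by simp
qed

lemma minimal_chord_midpoint:
  assumes "a \<in> I" "b \<in> I" "a < b" and "minimal_chord I C C' ((1/2) *\<^sub>R (C a + C b)) u v"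
  shows "u = a" "v = b"
proof -
  have "chord_area C C' u v \<le> chord_area C C' a b" "chord_through I C ((1/2) *\<^sub>R (C a + C b)) u v"
    using assms midpoint_chord_through[OF assms(1-3)] unfolding minimal_chord_def by auto
  thus "u = a" "v = b" using midpoint_chord_area_less[OF assms(1-3) refl] by force+
qed

end

lemma interior_ray_point:
  fixes p w :: "'a::real_normed_vector"
  assumes "p \<in> interior S"
  obtains \<delta> where "\<delta> > 0" "p + \<delta> *\<^sub>R w \<in> S"
proof -
  obtain \<epsilon> where \<epsilon>: "\<epsilon> > 0" "ball p \<epsilon> \<subseteq> S" using assms mem_interior by blast
  have w1: "norm w + 1 > 0" by (simp add: add_nonneg_pos)
  define \<delta> where "\<delta> = \<epsilon> / (norm w + 1)"
  have "\<delta> > 0" using \<epsilon> w1 unfolding \<delta>_def by simp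
  moreover have "norm (\<delta> *\<^sub>R w) < \<epsilon>"
  proof -
    have "norm (\<delta> *\<^sub>R w) = \<delta> * norm w" using \<open>\<delta> > 0\<close> by simp
    also have "\<dots> < \<delta> * (norm w + 1)" using \<open>\<delta> > 0\<close> by simp
    also have "\<dots> = \<epsilon>" unfolding \<delta>_def using w1 by simp
    finally show ?thesis .
  qed
  hence "p + \<delta> *\<^sub>R w \<in> S" using \<epsilon> by (simp add: dist_norm subset_iff)
  ultimately show ?thesis using that by blast
qed

lemma hessian_form:
  fixes U W :: "real \<times> real"
  assumes c: "cross2 U W \<noteq> 0"
  defines "H \<equiv> \<lambda>k. rot90 ((1/2) *\<^sub>R ((2 * cross2 U k / cross2 U W) *\<^sub>R W - (2 * cross2 k W / cross2 U W) *\<^sub>R U))"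
  shows "H U \<bullet> U = 0" "H W \<bullet> W = 0" "H U \<bullet> W = cross2 W U" "hess_det H = -1"
proof -
  have HU: "H U = rot90 (- U)" and HW: "H W = rot90 W" using c unfolding H_def by (simp_all add: cross2_simps)
  show "H U \<bullet> U = 0" "H W \<bullet> W = 0" "H U \<bullet> W = cross2 W U"
    unfolding HU HW by (simp_all add: rot90_def inner_prod_def cross2_def)
  obtain u1 u2 w1 w2 where UW: "U = (u1, u2)" "W = (w1, w2)" by fastforce
  define d where "d = u1 * w2 - u2 * w1"
  have d: "d \<noteq> 0" using c by (simp add: UW cross2_def d_def)
  have "H (1, 0) = ((u2 * w2 + w2 * u2) / d, (- u2 * w1 - w2 * u1) / d)"
    "H (0, 1) = ((- u1 * w2 - w1 * u2) / d, (u1 * w1 + w1 * u1) / d)"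
    unfolding H_def UW using d by (simp_all add: cross2_def rot90_def d_def[symmetric] field_simps)
  hence "hess_det H = ((u2 * w2 + w2 * u2) * (u1 * w1 + w1 * u1)
      - (- u2 * w1 - w2 * u1) * (- u1 * w2 - w1 * u2)) / (d * d)"
    unfolding hess_det_def using d by (simp add: inner_prod_def field_simps)
  also have "(u2 * w2 + w2 * u2) * (u1 * w1 + w1 * u1) - (- u2 * w1 - w2 * u1) * (- u1 * w2 - w1 * u2) = - (d * d)"
    unfolding d_def by algebra
  finally show "hess_det H = -1" using d by simp
qed

context convex_C1_arc begin

lemma curve_not_in_interior_area_domain:
  assumes "convex_curve I C" "r \<in> I"
  shows "C r \<notin> interior (area_domain I C)"
proof
  assume interior: "C r \<in> interior (area_domain I C)"
  have "area_domain I C \<subseteq> convex hull (C ` I)"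
  proof
    fix y assume "y \<in> area_domain I C"
    then obtain a b where y: "y = (1/2) *\<^sub>R C a + (1/2) *\<^sub>R C b" "a \<in> I" "b \<in> I"
      unfolding area_domain_def by (auto simp: scaleR_right_distrib)
    have "C a \<in> convex hull (C ` I)" "C b \<in> convex hull (C ` I)" using y hull_subset by fastforce+
    thus "y \<in> convex hull (C ` I)" unfolding y(1) by (intro convexD[OF convex_convex_hull]) auto
  qed
  hence "C r \<in> interior (convex hull (C ` I))" using interior interior_mono by blast
  moreover have "C r \<in> frontier (convex hull (C ` I))" using assms unfolding convex_curve_def by auto
  ultimately show False unfolding frontier_def by auto
qed

text \<open>Were \<open>a\<close> the first parameter, the nearby point \<open>p - (\<delta>/2) C' a\<close> of the domain would be the
  midpoint of \<open>C a'\<close>, \<open>C b'\<close> with \<open>a \<le> a'\<close>; seen from the tangent at \<open>b'\<close> the vector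
  \<open>C a' - C a\<close> points weakly backwards whereas the equal vector \<open>C b - \<delta> C' a - C b'\<close> points
  strictly forwards.\<close>
lemma exists_before_chord:
  assumes ab: "a \<in> I" "b \<in> I" "a < b" and p: "p = (1/2) *\<^sub>R (C a + C b)"
    and interior: "p \<in> interior (area_domain I C)"
  shows "\<exists>r\<in>I. r < a"
proof (rule ccontr)
  assume "\<not> ?thesis"
  hence first: "\<And>r. r \<in> I \<Longrightarrow> a \<le> r" by (meson not_le)
  obtain \<delta> where "\<delta> > 0" and "p + \<delta> *\<^sub>R (- (1/2) *\<^sub>R C' a) \<in> area_domain I C"
    using interior_ray_point[OF interior] .
  then obtain a' b' where y: "p + \<delta> *\<^sub>R (- (1/2) *\<^sub>R C' a) = (1/2) *\<^sub>R (C a' + C b')"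
      and a'b': "a' \<in> I" "b' \<in> I" "a' \<le> b'"
    unfolding area_domain_def by blast
  have same: "C a' - C a = C b - \<delta> *\<^sub>R C' a - C b'"
    using y unfolding p by (auto simp: prod_eq_iff algebra_simps)
  have "cross2 (C' b') (C a' - C a) \<le> 0"
    using tangent_cross_earlier_chord[OF a'b'(2) ab(1) a'b'(1)] first[OF a'b'(1)] a'b'(3)
    by (cases "a = a'") (auto simp: cross2_simps)
  moreover have "cross2 (C' b') (C b - \<delta> *\<^sub>R C' a - C b') > 0"
  proof -
    have "cross2 (C' a) (C' b') \<ge> 0"
      using tangents_turn_left[OF ab(1) a'b'(2)] first[OF a'b'(2)] by (cases "a = b'") (auto simp: cross2_simps)
    moreover have "b' = b \<Longrightarrow> cross2 (C' a) (C' b') > 0" using tangents_turn_left[OF ab] by simp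
    moreover have "b' \<noteq> b \<Longrightarrow> cross2 (C' b') (C b - C b') > 0"
      using strictly_left_of_tangent[OF a'b'(2) ab(2)] by simp
    moreover have "cross2 (C' b') (C b - \<delta> *\<^sub>R C' a - C b') = cross2 (C' b') (C b - C b') + \<delta> * cross2 (C' a) (C' b')"
      by (simp add: cross2_def algebra_simps)
    ultimately show ?thesis using left_of_tangent[OF ab(2) a'b'(2)] \<open>\<delta> > 0\<close>
      by (smt (verit) mult_nonneg_nonneg mult_pos_pos)
  qed
  ultimately show False using same by simp
qed

lemma exists_after_chord:
  assumes ab: "a \<in> I" "b \<in> I" "a < b" and p: "p = (1/2) *\<^sub>R (C a + C b)"
    and interior: "p \<in> interior (area_domain I C)"
  shows "\<exists>r\<in>I. b < r"
proof (rule ccontr)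
  assume "\<not> ?thesis"
  hence last: "\<And>r. r \<in> I \<Longrightarrow> r \<le> b" by (meson not_le)
  obtain \<delta> where "\<delta> > 0" and "p + \<delta> *\<^sub>R ((1/2) *\<^sub>R C' b) \<in> area_domain I C"
    using interior_ray_point[OF interior] .
  then obtain a' b' where y: "p + \<delta> *\<^sub>R ((1/2) *\<^sub>R C' b) = (1/2) *\<^sub>R (C a' + C b')"
      and a'b': "a' \<in> I" "b' \<in> I" "a' \<le> b'"
    unfolding area_domain_def by blast
  have same: "C b' - C b = C a + \<delta> *\<^sub>R C' b - C a'"
    using y unfolding p by (auto simp: prod_eq_iff algebra_simps)
  have "cross2 (C' a') (C b' - C b) \<le> 0"
    using tangent_cross_later_chord[OF a'b'(1,2) ab(2)] last[OF a'b'(2)] a'b'(3)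
    by (cases "b' = b") (auto simp: cross2_simps)
  moreover have "cross2 (C' a') (C a + \<delta> *\<^sub>R C' b - C a') > 0"
  proof -
    have "cross2 (C' a') (C' b) \<ge> 0"
      using tangents_turn_left[OF a'b'(1) ab(2)] last[OF a'b'(1)] by (cases "a' = b") (auto simp: cross2_simps)
    moreover have "a' = a \<Longrightarrow> cross2 (C' a') (C' b) > 0" using tangents_turn_left[OF ab] by simp
    moreover have "a' \<noteq> a \<Longrightarrow> cross2 (C' a') (C a - C a') > 0"
      using strictly_left_of_tangent[OF a'b'(1) ab(1)] by simp
    moreover have "cross2 (C' a') (C a + \<delta> *\<^sub>R C' b - C a') = cross2 (C' a') (C a - C a') + \<delta> * cross2 (C' a') (C' b)"
      by (simp add: cross2_def algebra_simps)
    ultimately show ?thesis using left_of_tangent[OF ab(1) a'b'(1)] \<open>\<delta> > 0\<close>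
      by (smt (verit) mult_nonneg_nonneg mult_pos_pos)
  qed
  ultimately show False using same by simp
qed

lemma interior_area_domain_midpoint:
  assumes "convex_curve I C" "p \<in> interior (area_domain I C)"
  obtains a b where "a \<in> interior I" "b \<in> interior I" "a < b" "p = (1/2) *\<^sub>R (C a + C b)"
proof -
  obtain a b where ab: "p = (1/2) *\<^sub>R (C a + C b)" "a \<in> I" "b \<in> I" "a \<le> b"
    using assms(2) interior_subset unfolding area_domain_def by blast
  have "a \<noteq> b"
  proof
    assume "a = b"
    hence "p = C a" using ab by (simp add: scaleR_2[symmetric] scaleR_right_distrib[symmetric])
    thus False using curve_not_in_interior_area_domain[OF assms(1) ab(2)] assms(2) by simp
  qed
  hence "a < b" using ab by simp
  moreover obtain r r' where "r \<in> I" "r < a" "r' \<in> I" "b < r'"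
    using exists_before_chord[OF ab(2,3) \<open>a < b\<close> ab(1) assms(2)]
      exists_after_chord[OF ab(2,3) \<open>a < b\<close> ab(1) assms(2)] by blast
  ultimately show ?thesis
    using that interior_between[of r b a] interior_between[of a r' b] ab by blast
qed

definition midpoint_map :: "real \<times> real \<Rightarrow> real \<times> real" where
  "midpoint_map z = (1/2) *\<^sub>R (C (fst z) + C (snd z))"

definition midpoint_map_deriv :: "real \<times> real \<Rightarrow> real \<times> real \<Rightarrow> real \<times> real" where
  "midpoint_map_deriv z j = (1/2) *\<^sub>R (fst j *\<^sub>R C' (fst z) + snd j *\<^sub>R C' (snd z))"

definition midpoint_map_deriv_inv :: "real \<times> real \<Rightarrow> real \<times> real \<Rightarrow> real \<times> real" where
  "midpoint_map_deriv_inv z k =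
    (2 * cross2 k (C' (snd z)) / cross2 (C' (fst z)) (C' (snd z)),
     2 * cross2 (C' (fst z)) k / cross2 (C' (fst z)) (C' (snd z)))"

definition chord_parameters :: "(real \<times> real) set" where
  "chord_parameters = (interior I \<times> interior I) \<inter> {z. fst z < snd z}"

definition chord_gradient :: "real \<times> real \<Rightarrow> real \<times> real" where
  "chord_gradient z = rot90 ((1/2) *\<^sub>R (C (snd z) - C (fst z)))"

lemma open_chord_parameters: "open chord_parameters"
  unfolding chord_parameters_def
  by (intro open_Int open_Times open_interior open_Collect_less continuous_intros)

lemma chord_parameters_tangents:
  assumes "z \<in> chord_parameters"
  shows "cross2 (C' (fst z)) (C' (snd z)) > 0"
proof -
  have "fst z \<in> I" "snd z \<in> I" "fst z < snd z"
    using assms interior_subset[of I] unfolding chord_parameters_def by auto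
  thus ?thesis by (rule tangents_turn_left)
qed

lemma midpoint_map_deriv_inv_inverse:
  assumes "cross2 (C' (fst z)) (C' (snd z)) \<noteq> 0"
  shows "midpoint_map_deriv_inv z (midpoint_map_deriv z j) = j"
    and "midpoint_map_deriv z (midpoint_map_deriv_inv z k) = k"
proof -
  show "midpoint_map_deriv_inv z (midpoint_map_deriv z j) = j"
    using assms
    by (simp add: midpoint_map_deriv_inv_def midpoint_map_deriv_def cross2_def prod_eq_iff field_simps)
  have "midpoint_map_deriv z (midpoint_map_deriv_inv z k)
      = (1 / cross2 (C' (fst z)) (C' (snd z))) *\<^sub>R
        (cross2 (C' (fst z)) k *\<^sub>R C' (snd z) - cross2 (C' (snd z)) k *\<^sub>R C' (fst z))"
    using assms
    by (simp add: midpoint_map_deriv_def midpoint_map_deriv_inv_def cross2_commute[of k] prod_eq_iff field_simps)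
  thus "midpoint_map_deriv z (midpoint_map_deriv_inv z k) = k"
    using cross2_scaleR_identity[of "C' (fst z)" k "C' (snd z)"] assms by simp
qed

lemma bounded_linear_midpoint_map_deriv_inv: "bounded_linear (midpoint_map_deriv_inv z)"
  unfolding midpoint_map_deriv_inv_def
  by (intro bounded_linear_Pair bounded_linear_divide bounded_linear_mult_right
      bounded_bilinear.bounded_linear_left[OF bounded_bilinear_cross2]
      bounded_bilinear.bounded_linear_right[OF bounded_bilinear_cross2]
      bounded_linear_compose[OF bounded_linear_divide] bounded_linear_compose[OF bounded_linear_mult_right])

lemma has_derivative_C_fst_snd:
  assumes "fst z \<in> interior I" "snd z \<in> interior I"
  shows "((\<lambda>z. C (fst z)) has_derivative (\<lambda>j. fst j *\<^sub>R C' (fst z))) (at z)"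
    and "((\<lambda>z. C (snd z)) has_derivative (\<lambda>j. snd j *\<^sub>R C' (snd z))) (at z)"
  using has_derivative_compose[OF has_derivative_fst[OF has_derivative_ident]
      C_derivative_interior[OF assms(1), unfolded has_vector_derivative_def]]
    has_derivative_compose[OF has_derivative_snd[OF has_derivative_ident]
      C_derivative_interior[OF assms(2), unfolded has_vector_derivative_def]]
  by simp_all

lemma midpoint_map_has_derivative:
  assumes "z \<in> chord_parameters"
  shows "(midpoint_map has_derivative midpoint_map_deriv z) (at z)"
  using assms unfolding midpoint_map_def[abs_def] midpoint_map_deriv_def[abs_def] chord_parameters_def
  by (intro has_derivative_scaleR_right has_derivative_add has_derivative_C_fst_snd) auto

lemma midpoint_map_local_inverse:
  assumes z0: "z0 \<in> chord_parameters"
  obtains V h where "open V" "midpoint_map z0 \<in> V" "h (midpoint_map z0) = z0"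
    "\<And>y. y \<in> V \<Longrightarrow> h y \<in> chord_parameters \<and> midpoint_map (h y) = y"
    "\<And>y. y \<in> V \<Longrightarrow> (h has_derivative midpoint_map_deriv_inv (h y)) (at y)"
proof -
  define D where "D z = (blinfun_scaleR_left ((1/2) *\<^sub>R C' (fst z)) o\<^sub>L fst_blinfun)
                        + (blinfun_scaleR_left ((1/2) *\<^sub>R C' (snd z)) o\<^sub>L snd_blinfun)" for z
  have D_apply: "blinfun_apply (D z) = midpoint_map_deriv z" for z
    by (auto simp: D_def midpoint_map_deriv_def fun_eq_iff algebra_simps plus_blinfun.rep_eq
        blinfun_apply_blinfun_compose)
  have "fst ` chord_parameters \<subseteq> I" "snd ` chord_parameters \<subseteq> I"
    unfolding chord_parameters_def using interior_subset by fastforce+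
  hence "continuous_on chord_parameters (\<lambda>z. (1/2) *\<^sub>R C' (fst z))"
    "continuous_on chord_parameters (\<lambda>z. (1/2) *\<^sub>R C' (snd z))"
    by (auto intro!: continuous_on_scaleR continuous_on_const
        continuous_on_compose2[OF continuous_C' continuous_on_fst[OF continuous_on_id]]
        continuous_on_compose2[OF continuous_C' continuous_on_snd[OF continuous_on_id]])
  hence cont_D: "continuous_on chord_parameters D"
    unfolding D_def
    by (intro continuous_on_add bounded_bilinear.continuous_on[OF bounded_bilinear_blinfun_compose _ continuous_on_const]
        bounded_linear.continuous_on[OF bounded_linear_blinfun_scaleR_left])
  have cross_z0: "cross2 (C' (fst z0)) (C' (snd z0)) \<noteq> 0" using chord_parameters_tangents[OF z0] by simp
  have "Blinfun (midpoint_map_deriv_inv z0) o\<^sub>L D z0 = id_blinfun"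
    by (rule blinfun_eqI)
       (simp add: bounded_linear_Blinfun_apply[OF bounded_linear_midpoint_map_deriv_inv] D_apply
         midpoint_map_deriv_inv_inverse[OF cross_z0])
  then obtain U V g g' where U: "open U" "U \<subseteq> chord_parameters" "z0 \<in> U" "open V" "midpoint_map z0 \<in> V"
      "homeomorphism U V midpoint_map g"
      and g: "\<And>y. y \<in> V \<Longrightarrow> (g has_derivative g' y) (at y)"
      and g': "\<And>y. y \<in> V \<Longrightarrow> g' y = inv (blinfun_apply (D (g y)))"
    using inverse_function_theorem[OF open_chord_parameters _ cont_D z0, of midpoint_map]
      midpoint_map_has_derivative D_apply by metis
  have g_inverse: "\<And>y. y \<in> V \<Longrightarrow> g y \<in> chord_parameters \<and> midpoint_map (g y) = y" "g (midpoint_map z0) = z0"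
    using U unfolding homeomorphism_def by auto
  show ?thesis
  proof (rule that[OF U(4,5) g_inverse(2) g_inverse(1)])
    fix y assume y: "y \<in> V"
    have cross_y: "cross2 (C' (fst (g y))) (C' (snd (g y))) \<noteq> 0"
      using chord_parameters_tangents[of "g y"] g_inverse(1)[OF y] by simp
    have "inv (midpoint_map_deriv (g y)) = midpoint_map_deriv_inv (g y)"
      by (intro inv_unique_comp ext) (simp_all add: midpoint_map_deriv_inv_inverse[OF cross_y])
    thus "(g has_derivative midpoint_map_deriv_inv (g y)) (at y)" using g[OF y] g'[OF y] D_apply by simp
  qed
qed

lemma half_chord_area_has_derivative:
  assumes z: "z \<in> chord_parameters"
  shows "((\<lambda>z. chord_area C C' (fst z) (snd z) / 2) has_derivative
          (\<lambda>j. chord_gradient z \<bullet> midpoint_map_deriv z j)) (at z)"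
proof -
  have zI: "fst z \<in> interior I" "snd z \<in> interior I" "fst z < snd z"
    using z unfolding chord_parameters_def by auto
  obtain e where "e > 0" "ball (fst z) e \<subseteq> interior I"
    using zI(1) open_interior open_contains_ball by blast
  hence k0: "fst z - e/2 \<in> I" "fst z - e/2 < fst z" using interior_subset by (force simp: dist_real_def)+
  define k0 where "k0 = fst z - e/2"
  define W where "W = chord_parameters \<inter> {z. k0 < fst z}"
  have "open W" unfolding W_def by (intro open_Int open_chord_parameters open_Collect_less continuous_intros)
  have "z \<in> W" using z k0 unfolding W_def k0_def by auto
  have swept: "(swept_area 0 k0 has_derivative (\<lambda>h. cross2 (C r) (C' r) * h)) (at r)"
    if "r \<in> interior I" "k0 < r" for r
    using swept_area_derivative[OF k0(1)[folded k0_def] that, of 0] by (simp add: has_field_derivative_def)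
  have deriv: "((\<lambda>z. (swept_area 0 k0 (snd z) - swept_area 0 k0 (fst z) - cross2 (C (fst z)) (C (snd z))) / 4)
      has_derivative (\<lambda>j. (cross2 (C (snd z)) (C' (snd z)) * snd j - cross2 (C (fst z)) (C' (fst z)) * fst j
        - (cross2 (C (fst z)) (snd j *\<^sub>R C' (snd z)) + cross2 (fst j *\<^sub>R C' (fst z)) (C (snd z)))) / 4)) (at z)"
    using zI k0 unfolding k0_def[symmetric]
    by (intro bounded_linear.has_derivative[OF bounded_linear_divide] has_derivative_diff
        bounded_bilinear.FDERIV[OF bounded_bilinear_cross2] has_derivative_C_fst_snd
        has_derivative_compose[OF has_derivative_fst[OF has_derivative_ident] swept]
        has_derivative_compose[OF has_derivative_snd[OF has_derivative_ident] swept]) auto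
  have deriv_eq: "(\<lambda>j. (cross2 (C (snd z)) (C' (snd z)) * snd j - cross2 (C (fst z)) (C' (fst z)) * fst j
        - (cross2 (C (fst z)) (snd j *\<^sub>R C' (snd z)) + cross2 (fst j *\<^sub>R C' (fst z)) (C (snd z)))) / 4)
      = (\<lambda>j. chord_gradient z \<bullet> midpoint_map_deriv z j)"
    by (auto simp: fun_eq_iff chord_gradient_def midpoint_map_deriv_def inner_rot90 cross2_def field_simps)
  have local_eq: "chord_area C C' (fst z') (snd z') / 2
      = (swept_area 0 k0 (snd z') - swept_area 0 k0 (fst z') - cross2 (C (fst z')) (C (snd z'))) / 4"
    if "z' \<in> W" for z'
  proof -
    have "snd z' \<in> I" "k0 \<le> fst z'" "fst z' \<le> snd z'"
      using that interior_subset[of I] unfolding W_def chord_parameters_def by auto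
    thus ?thesis using chord_area_swept_area[OF k0(1)[folded k0_def], of "snd z'" "fst z'" 0] by simp
  qed
  show ?thesis
    by (rule has_derivative_transform_within_open[OF deriv[unfolded deriv_eq] \<open>open W\<close> \<open>z \<in> W\<close>])
       (rule local_eq[symmetric])
qed

lemma chord_gradient_has_derivative:
  assumes "z \<in> chord_parameters"
  shows "(chord_gradient has_derivative
          (\<lambda>j. rot90 ((1/2) *\<^sub>R (snd j *\<^sub>R C' (snd z) - fst j *\<^sub>R C' (fst z))))) (at z)"
  using assms unfolding chord_gradient_def[abs_def] chord_parameters_def
  by (intro bounded_linear.has_derivative[OF bounded_linear_rot90] has_derivative_scaleR_right
      has_derivative_diff has_derivative_C_fst_snd) auto

lemma area_distance_midpoint_map:
  assumes "z \<in> chord_parameters"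
  shows "area_distance I C C' (midpoint_map z) = chord_area C C' (fst z) (snd z) / 2"
proof -
  have "fst z \<in> I" "snd z \<in> I" "fst z < snd z"
    using assms interior_subset[of I] unfolding chord_parameters_def by auto
  thus ?thesis unfolding midpoint_map_def by (rule area_distance_midpoint)
qed

theorem area_distance_gradient_hessian:
  assumes convex: "convex_curve I C" and p: "p \<in> interior (area_domain I C)"
    and minimal: "minimal_chord I C C' p u v"
  shows "\<exists>grad Hf.
           (\<forall>\<^sub>F x in nhds p. (area_distance I C C' has_derivative (\<lambda>h. grad x \<bullet> h)) (at x))
         \<and> grad p = rot90 ((1/2) *\<^sub>R (C v - C u))
         \<and> (grad has_derivative Hf) (at p)
         \<and> Hf (C' u) \<bullet> C' u = 0
         \<and> Hf (C' v) \<bullet> C' v = 0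
         \<and> Hf (C' u) \<bullet> C' v = cross2 (C' v) (C' u)
         \<and> hess_det Hf = -1"
proof -
  obtain a b where ab: "a \<in> interior I" "b \<in> interior I" "a < b" "p = (1/2) *\<^sub>R (C a + C b)"
    using interior_area_domain_midpoint[OF convex p] .
  have "a \<in> I" "b \<in> I" using ab(1,2) interior_subset by auto
  hence "u = a" "v = b" using minimal_chord_midpoint ab(3) minimal unfolding ab(4) by blast+
  hence uv: "(u, v) \<in> chord_parameters" "p = midpoint_map (u, v)"
    using ab unfolding chord_parameters_def midpoint_map_def by auto
  obtain V h where V: "open V" "p \<in> V" "h p = (u, v)"
    and h: "\<And>y. y \<in> V \<Longrightarrow> h y \<in> chord_parameters \<and> midpoint_map (h y) = y"
    and h_deriv: "\<And>y. y \<in> V \<Longrightarrow> (h has_derivative midpoint_map_deriv_inv (h y)) (at y)"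
    using midpoint_map_local_inverse[OF uv(1)] unfolding uv(2)[symmetric] by metis
  have "(area_distance I C C' has_derivative (\<lambda>k. chord_gradient (h y) \<bullet> k)) (at y)" if "y \<in> V" for y
  proof (rule has_derivative_transform_within_open[OF _ V(1) that])
    have "cross2 (C' (fst (h y))) (C' (snd (h y))) \<noteq> 0" using chord_parameters_tangents[of "h y"] h[OF that] by simp
    thus "((\<lambda>y. chord_area C C' (fst (h y)) (snd (h y)) / 2) has_derivative (\<lambda>k. chord_gradient (h y) \<bullet> k)) (at y)"
      using has_derivative_compose[OF h_deriv[OF that] half_chord_area_has_derivative[of "h y"]] h[OF that]
      by (simp add: midpoint_map_deriv_inv_inverse)
    show "chord_area C C' (fst (h y')) (snd (h y')) / 2 = area_distance I C C' y'" if "y' \<in> V" for y'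
      using area_distance_midpoint_map[of "h y'"] h[OF that] by simp
  qed
  hence "\<forall>\<^sub>F y in nhds p. (area_distance I C C' has_derivative (\<lambda>k. (chord_gradient \<circ> h) y \<bullet> k)) (at y)"
    unfolding eventually_nhds using V by auto
  moreover have "(chord_gradient \<circ> h has_derivative (\<lambda>k. rot90 ((1/2) *\<^sub>R
      (snd (midpoint_map_deriv_inv (u, v) k) *\<^sub>R C' v - fst (midpoint_map_deriv_inv (u, v) k) *\<^sub>R C' u)))) (at p)"
    using diff_chain_at[OF h_deriv[OF V(2)] chord_gradient_has_derivative[OF uv(1)[folded V(3)]]] V(3)
    by (simp add: o_def)
  moreover have "cross2 (C' u) (C' v) \<noteq> 0" using chord_parameters_tangents[OF uv(1)] by simp
  ultimately show ?thesis
    using hessian_form[of "C' u" "C' v"] V(3)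
    by (intro exI[of _ "chord_gradient \<circ> h"] exI) (auto simp: chord_gradient_def midpoint_map_deriv_inv_def)
qed

end

lemma smooth_curve_imp_convex_C1_arc:
  assumes "is_interval I" "smooth_curve I C C'" "left_oriented I C C'" "no_parallel_tangents I C'"
  shows "convex_C1_arc I C C'"
proof
  obtain Cd where Cd: "Cd 0 = C" "Cd 1 = C'"
      "\<And>k t. t \<in> I \<Longrightarrow> (Cd k has_vector_derivative Cd (Suc k) t) (at t within I)"
    using assms(2) unfolding smooth_curve_def by blast
  show "(C has_vector_derivative C' t) (at t within I)" if "t \<in> I" for t
    using Cd(3)[OF that, of 0] Cd(1,2) by simp
  show "continuous_on I C'"
    using Cd(3)[of _ 1] Cd(2) unfolding continuous_on_eq_continuous_within
    by (metis One_nat_def has_vector_derivative_continuous)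
qed (use assms in auto)

theorem mainTheorem2:
  fixes I :: "real set" and C C' :: "real \<Rightarrow> real \<times> real"
    and p :: "real \<times> real" and u v :: real
  assumes "is_interval I"
    and "smooth_curve I C C'"
    and "regular_curve I C'"
    and "convex_curve I C"
    and "left_oriented I C C'"
    and "no_parallel_tangents I C'"
    and "p \<in> interior (area_domain I C)"
    and "minimal_chord I C C' p u v"
  shows "\<exists>grad Hf.
           (\<forall>\<^sub>F x in nhds p. (area_distance I C C' has_derivative (\<lambda>h. grad x \<bullet> h)) (at x))
         \<and> grad p = rot90 ((1/2) *\<^sub>R (C v - C u))
         \<and> (grad has_derivative Hf) (at p)
         \<and> Hf (C' u) \<bullet> C' u = 0
         \<and> Hf (C' v) \<bullet> C' v = 0
         \<and> Hf (C' u) \<bullet> C' v = cross2 (C' v) (C' u)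
         \<and> hess_det Hf = -1"
proof -
  interpret convex_C1_arc I C C'
    using smooth_curve_imp_convex_C1_arc assms(1,2,5,6) .
  show ?thesis using area_distance_gradient_hessian assms(4,7,8) .
qed

end
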